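(* Let $a,b\in E_{d+1}$ be linearly independent and satisfy $(a,a)=(b,b)=(a,b)=0$. Then $d+1\ge4$, and there is a $\Lambda\in G_0$ such that $\Lambda a=e_0+e_1$ and $\Lambda b=\pm(\varepsilon e_{d-1}+e_d)$, where $\varepsilon=\pm1$. Moreover, any $x\in E_{d+1}$ such that $(x,a)=(x,b)=(x,x)=0$ is a linear combination of $a$ and $b$.
   Context: Let $d\ge1$. $E_{d+1}=\mathbb R^{d+1}$ with the bilinear form $(x,y)=x^0y^0+x^dy^d-\sum_{j=1}^{d-1}x^jy^j$ and canonical basis $e_0,\dots,e_d$. $G_0$ is the connected component of the identity of the group of real linear maps of $E_{d+1}$ preserving this form. *)

theory Defs
  imports "HOL-Analysis.Analysis"
begin

text \<open>E_{d+1} = R^{d+1} is represented by functions nat => real vanishing above index d;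
  linear maps of E_{d+1} by (d+1)x(d+1) matrices nat => nat => real vanishing outside
  {0..d} x {0..d}. The space of such matrices carries the product topology
  (Function_Topology), which on this finite-dimensional block is the Euclidean one.\<close>

definition Evec :: "nat \<Rightarrow> (nat \<Rightarrow> real) set" where
  "Evec d = {x. \<forall>i>d. x i = 0}"

definition Emat :: "nat \<Rightarrow> (nat \<Rightarrow> nat \<Rightarrow> real) set" where
  "Emat d = {M. \<forall>i j. (d < i \<or> d < j) \<longrightarrow> M i j = 0}"

definition mapply :: "nat \<Rightarrow> (nat \<Rightarrow> nat \<Rightarrow> real) \<Rightarrow> (nat \<Rightarrow> real) \<Rightarrow> (nat \<Rightarrow> real)" where
  "mapply d M x = (\<lambda>i. \<Sum>j\<le>d. M i j * x j)"

definition idmat :: "nat \<Rightarrow> (nat \<Rightarrow> nat \<Rightarrow> real)" where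
  "idmat d = (\<lambda>i j. if i = j \<and> i \<le> d then 1 else 0)"

definition bform :: "nat \<Rightarrow> (nat \<Rightarrow> real) \<Rightarrow> (nat \<Rightarrow> real) \<Rightarrow> real" where
  "bform d x y = x 0 * y 0 + x d * y d - (\<Sum>j\<in>{1..<d}. x j * y j)"

definition basis_e :: "nat \<Rightarrow> (nat \<Rightarrow> real)" where
  "basis_e k = (\<lambda>j. if j = k then 1 else 0)"

definition Ogroup :: "nat \<Rightarrow> (nat \<Rightarrow> nat \<Rightarrow> real) set" where
  "Ogroup d = {M \<in> Emat d. \<forall>x\<in>Evec d. \<forall>y\<in>Evec d.
                 bform d (mapply d M x) (mapply d M y) = bform d x y}"

definition G0 :: "nat \<Rightarrow> (nat \<Rightarrow> nat \<Rightarrow> real) set" where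
  "G0 d = connected_component_set (Ogroup d) (idmat d)"

end

theory Submission
  imports Defs
begin

text \<open>The elements of \<open>G\<^sub>0\<close> needed are composed of products \<open>R\<^bsub>v\<^esub> R\<^bsub>u\<^esub>\<close> of two reflections
  \<open>R\<^bsub>w\<^esub> x = x - 2 (w,x)/(w,w) w\<close>. If \<open>u\<close> and \<open>v\<close> are joined by a path \<open>s \<mapsto> w s\<close> of
  non-isotropic vectors, then \<open>s \<mapsto> R\<^bsub>w s\<^esub> R\<^bsub>u\<^esub>\<close> is a path in the orthogonal group from
  \<open>R\<^bsub>u\<^esub>\<^sup>2 = 1\<close>, so \<open>R\<^bsub>v\<^esub> R\<^bsub>u\<^esub> \<in> G\<^sub>0\<close>. Such products give rotations between vectors of equal
  norm, boosts and null rotations.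

  A null vector \<open>a\<close> splits into parts in \<open>span(e\<^sub>0, e\<^sub>d)\<close> and \<open>span(e\<^sub>1, \<dots>, e\<^sub>d\<^sub>-\<^sub>1)\<close> of norms
  \<open>r\<^sup>2\<close> and \<open>-r\<^sup>2\<close>; rotating them onto \<open>r e\<^sub>0\<close> and \<open>r e\<^sub>1\<close> and boosting by \<open>1/r\<close> moves \<open>a\<close>
  to \<open>e\<^sub>0 + e\<^sub>1\<close>. A null rotation fixing \<open>e\<^sub>0 + e\<^sub>1\<close> then removes the \<open>e\<^sub>0 + e\<^sub>1\<close>-component
  of the image of \<open>b\<close>, and a rotation and a boost fixing \<open>e\<^sub>0 + e\<^sub>1\<close> bring it to
  \<open>\<plusminus>(\<epsilon> e\<^sub>d\<^sub>-\<^sub>1 + e\<^sub>d)\<close>. Both \<open>d \<ge> 3\<close> and the last claim come from the fact that a null vector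
  is zero as soon as its \<open>e\<^sub>0\<close>- and \<open>e\<^sub>d\<close>-coordinates, or all its other coordinates, vanish.\<close>

definition eta :: "nat \<Rightarrow> nat \<Rightarrow> real" where
  "eta d j = (if j = 0 \<or> j = d then 1 else -1)"

lemma eta_simps [simp]:
  "eta d 0 = 1" "eta d d = 1" "0 < k \<Longrightarrow> k < d \<Longrightarrow> eta d k = -1"
  unfolding eta_def by simp_all

lemma bform_sym: "bform d x y = bform d y x"
  unfolding bform_def by (simp add: mult.commute)

lemma bform_lincomb_left:
  "bform d (\<lambda>i. \<alpha> * x i + \<beta> * y i) z = \<alpha> * bform d x z + \<beta> * bform d y z"
  unfolding bform_def by (simp add: algebra_simps sum.distrib sum_distrib_left)

lemma bform_lincomb_right:
  "bform d z (\<lambda>i. \<alpha> * x i + \<beta> * y i) = \<alpha> * bform d z x + \<beta> * bform d z y"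
  by (metis bform_sym bform_lincomb_left)

lemma bform_linear [simp]:
  "bform d (\<lambda>i. x i + y i) z = bform d x z + bform d y z"
  "bform d z (\<lambda>i. x i + y i) = bform d z x + bform d z y"
  "bform d (\<lambda>i. x i - y i) z = bform d x z - bform d y z"
  "bform d z (\<lambda>i. x i - y i) = bform d z x - bform d z y"
  "bform d (\<lambda>i. c * x i) z = c * bform d x z"
  "bform d z (\<lambda>i. c * x i) = c * bform d z x"
  "bform d (\<lambda>i. - x i) z = - bform d x z"
  "bform d z (\<lambda>i. - x i) = - bform d z x"
  "bform d (\<lambda>i. 0) z = 0"
  "bform d z (\<lambda>i. 0) = 0"
  using bform_lincomb_left[of d 1 x 1 y z] bform_lincomb_right[of d z 1 x 1 y]
    bform_lincomb_left[of d 1 x "-1" y z] bform_lincomb_right[of d z 1 x "-1" y]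
    bform_lincomb_left[of d c x 0 x z] bform_lincomb_right[of d z c x 0 x]
    bform_lincomb_left[of d "-1" x 0 x z] bform_lincomb_right[of d z "-1" x 0 x]
    bform_lincomb_left[of d 0 x 0 x z] bform_lincomb_right[of d z 0 x 0 x]
  by simp_all

lemma bform_eq_sum:
  assumes "1 \<le> d"
  shows "bform d x y = (\<Sum>j\<le>d. eta d j * x j * y j)"
proof -
  have "{..d} = insert 0 (insert d {1..<d})" using assms by auto
  then have "(\<Sum>j\<le>d. eta d j * x j * y j)
      = x 0 * y 0 + x d * y d + (\<Sum>j\<in>{1..<d}. eta d j * x j * y j)"
    using assms by simp
  also have "(\<Sum>j\<in>{1..<d}. eta d j * x j * y j) = - (\<Sum>j\<in>{1..<d}. x j * y j)"
    by (simp add: sum_negf[symmetric])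
  finally show ?thesis unfolding bform_def by simp
qed

lemma basis_e_apply [simp]: "basis_e k k = 1" "j \<noteq> k \<Longrightarrow> basis_e k j = 0"
  unfolding basis_e_def by simp_all

lemma basis_e_in_Evec [simp]: "k \<le> d \<Longrightarrow> basis_e k \<in> Evec d"
  unfolding Evec_def basis_e_def by auto

lemma bform_basis_right [simp]:
  assumes "1 \<le> d" "k \<le> d"
  shows "bform d x (basis_e k) = eta d k * x k"
proof -
  have "(\<Sum>j\<le>d. eta d j * x j * basis_e k j) = (\<Sum>j\<le>d. if j = k then eta d k * x k else 0)"
    by (rule sum.cong) (auto simp: basis_e_def)
  then show ?thesis using assms by (simp add: bform_eq_sum)
qed

lemma bform_basis_left [simp]:
  "1 \<le> d \<Longrightarrow> k \<le> d \<Longrightarrow> bform d (basis_e k) x = eta d k * x k"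
  by (metis bform_basis_right bform_sym)

lemma Evec_linear [simp]:
  "x \<in> Evec d \<Longrightarrow> y \<in> Evec d \<Longrightarrow> (\<lambda>i. x i + y i) \<in> Evec d"
  "x \<in> Evec d \<Longrightarrow> y \<in> Evec d \<Longrightarrow> (\<lambda>i. x i - y i) \<in> Evec d"
  "x \<in> Evec d \<Longrightarrow> (\<lambda>i. c * x i) \<in> Evec d"
  unfolding Evec_def by auto

definition pos_part :: "nat \<Rightarrow> (nat \<Rightarrow> real) \<Rightarrow> (nat \<Rightarrow> real)" where
  "pos_part d x = (\<lambda>i. if i = 0 \<or> i = d then x i else 0)"

definition neg_part :: "nat \<Rightarrow> (nat \<Rightarrow> real) \<Rightarrow> (nat \<Rightarrow> real)" where
  "neg_part d x = (\<lambda>i. if 0 < i \<and> i < d then x i else 0)"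

lemma pos_part_in_Evec [simp]: "pos_part d x \<in> Evec d"
  unfolding pos_part_def Evec_def by auto

lemma neg_part_in_Evec [simp]: "neg_part d x \<in> Evec d"
  unfolding neg_part_def Evec_def by auto

lemma pos_part_apply [simp]:
  "pos_part d x 0 = x 0" "pos_part d x d = x d" "0 < k \<Longrightarrow> k < d \<Longrightarrow> pos_part d x k = 0"
  unfolding pos_part_def by simp_all

lemma neg_part_apply [simp]:
  "neg_part d x 0 = 0" "neg_part d x d = 0" "0 < k \<Longrightarrow> k < d \<Longrightarrow> neg_part d x k = x k"
  unfolding neg_part_def by simp_all

lemma pos_plus_neg_part: "x \<in> Evec d \<Longrightarrow> (\<lambda>i. pos_part d x i + neg_part d x i) = x"
  unfolding pos_part_def neg_part_def Evec_def by (auto simp: fun_eq_iff)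

lemma bform_pos_part: "bform d (pos_part d x) (pos_part d y) = x 0 * y 0 + x d * y d"
proof -
  have "(\<Sum>j\<in>{1..<d}. pos_part d x j * pos_part d y j) = 0"
    by (rule sum.neutral) (auto simp: pos_part_def)
  then show ?thesis
    unfolding bform_def by (simp add: pos_part_def)
qed

lemma bform_neg_part: "bform d (neg_part d x) (neg_part d y) = - (\<Sum>j\<in>{1..<d}. x j * y j)"
proof -
  have "(\<Sum>j\<in>{1..<d}. neg_part d x j * neg_part d y j) = (\<Sum>j\<in>{1..<d}. x j * y j)"
    by (rule sum.cong) (auto simp: neg_part_def)
  then show ?thesis
    unfolding bform_def by (simp add: neg_part_def)
qed

lemma bform_pos_neg_part: "bform d (pos_part d x) (neg_part d y) = 0"
proof -
  have "(\<Sum>j\<in>{1..<d}. pos_part d x j * neg_part d y j) = 0"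
    by (rule sum.neutral) (auto simp: pos_part_def)
  then show ?thesis
    unfolding bform_def by (simp add: pos_part_def neg_part_def)
qed

lemma null_eq_0_if_pos_coords_0:
  assumes "x \<in> Evec d" "bform d x x = 0" "x 0 = 0" "x d = 0"
  shows "x = (\<lambda>i. 0)"
proof
  fix i
  have "(\<Sum>j\<in>{1..<d}. x j * x j) = 0"
    using assms(2-4) unfolding bform_def by simp
  then have neg: "\<forall>j\<in>{1..<d}. x j = 0"
    by (subst (asm) sum_nonneg_eq_0_iff) auto
  consider "i = 0 \<or> i = d" | "i \<in> {1..<d}" | "d < i"
    by fastforce
  then show "x i = 0"
    using neg assms(1,3,4) unfolding Evec_def by cases auto
qed

lemma null_eq_0_if_neg_coords_0:
  assumes "x \<in> Evec d" "bform d x x = 0" "\<forall>j\<in>{1..<d}. x j = 0"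
  shows "x = (\<lambda>i. 0)"
proof (rule null_eq_0_if_pos_coords_0[OF assms(1,2)])
  have "x 0 * x 0 + x d * x d = 0"
    using assms(2,3) unfolding bform_def by simp
  then show "x 0 = 0" "x d = 0"
    by (simp_all add: add_nonneg_eq_0_iff)
qed

definition mmul :: "nat \<Rightarrow> (nat \<Rightarrow> nat \<Rightarrow> real) \<Rightarrow> (nat \<Rightarrow> nat \<Rightarrow> real) \<Rightarrow> (nat \<Rightarrow> nat \<Rightarrow> real)" where
  "mmul d A B = (\<lambda>i j. \<Sum>k\<le>d. A i k * B k j)"

lemma mapply_mmul: "mapply d (mmul d A B) x = mapply d A (mapply d B x)"
proof
  fix i
  have "(\<Sum>j\<le>d. (\<Sum>k\<le>d. A i k * B k j) * x j) = (\<Sum>j\<le>d. \<Sum>k\<le>d. A i k * (B k j * x j))"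
    by (simp add: sum_distrib_right mult.assoc)
  also have "\<dots> = (\<Sum>k\<le>d. A i k * (\<Sum>j\<le>d. B k j * x j))"
    by (subst sum.swap) (simp add: sum_distrib_left)
  finally show "mapply d (mmul d A B) x i = mapply d A (mapply d B x) i"
    unfolding mapply_def mmul_def .
qed

lemma mmul_in_Emat: "A \<in> Emat d \<Longrightarrow> B \<in> Emat d \<Longrightarrow> mmul d A B \<in> Emat d"
  unfolding Emat_def mmul_def by auto

lemma mapply_in_Evec: "M \<in> Emat d \<Longrightarrow> mapply d M x \<in> Evec d"
  unfolding Emat_def Evec_def mapply_def by auto

lemma mapply_linear:
  "mapply d M (\<lambda>i. x i + y i) = (\<lambda>i. mapply d M x i + mapply d M y i)"
  "mapply d M (\<lambda>i. x i - y i) = (\<lambda>i. mapply d M x i - mapply d M y i)"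
  "mapply d M (\<lambda>i. c * x i) = (\<lambda>i. c * mapply d M x i)"
  unfolding mapply_def by (simp_all add: sum.distrib sum_subtractf sum_distrib_left algebra_simps)

lemma mapply_basis_e: "j \<le> d \<Longrightarrow> mapply d M (basis_e j) i = M i j"
  unfolding mapply_def basis_e_def by (simp add: if_distrib cong: if_cong)

lemma Emat_eqI:
  assumes "A \<in> Emat d" "B \<in> Emat d" "\<And>x. x \<in> Evec d \<Longrightarrow> mapply d A x = mapply d B x"
  shows "A = B"
proof (intro ext)
  fix i j
  show "A i j = B i j"
  proof (cases "j \<le> d")
    case True
    then show ?thesis using assms(3)[of "basis_e j"] by (metis mapply_basis_e basis_e_in_Evec)
  next
    case False
    then show ?thesis using assms(1,2) unfolding Emat_def by simp
  qed
qed

lemma mapply_idmat: "x \<in> Evec d \<Longrightarrow> mapply d (idmat d) x = x"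
proof
  fix i assume x: "x \<in> Evec d"
  have "(\<Sum>j\<le>d. idmat d i j * x j) = (\<Sum>j\<le>d. if j = i then x i else 0)"
    using x unfolding idmat_def Evec_def by (intro sum.cong) auto
  then show "mapply d (idmat d) x i = x i"
    using x unfolding mapply_def Evec_def by simp
qed

lemma idmat_in_Emat: "idmat d \<in> Emat d"
  unfolding Emat_def idmat_def by auto

lemma idmat_in_Ogroup: "idmat d \<in> Ogroup d"
  unfolding Ogroup_def by (simp add: idmat_in_Emat mapply_idmat)

lemma mmul_in_Ogroup: "A \<in> Ogroup d \<Longrightarrow> B \<in> Ogroup d \<Longrightarrow> mmul d A B \<in> Ogroup d"
  unfolding Ogroup_def by (simp add: mmul_in_Emat mapply_mmul mapply_in_Evec)

lemma Ogroup_bform: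
  "M \<in> Ogroup d \<Longrightarrow> x \<in> Evec d \<Longrightarrow> y \<in> Evec d \<Longrightarrow>
    bform d (mapply d M x) (mapply d M y) = bform d x y"
  unfolding Ogroup_def by blast

lemma Ogroup_inj_on:
  assumes "1 \<le> d" "M \<in> Ogroup d"
  shows "inj_on (mapply d M) (Evec d)"
proof
  fix x y assume xy: "x \<in> Evec d" "y \<in> Evec d" "mapply d M x = mapply d M y"
  have "x k - y k = 0" for k
  proof (cases "k \<le> d")
    case True
    have "eta d k * (x k - y k) = bform d (\<lambda>i. x i - y i) (basis_e k)"
      using assms(1) True by (simp add: algebra_simps)
    also have "\<dots> = bform d (mapply d M (\<lambda>i. x i - y i)) (mapply d M (basis_e k))"
      using assms(2) xy True by (simp add: Ogroup_bform)
    also have "\<dots> = 0"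
      using xy(3) by (simp add: mapply_linear)
    finally show ?thesis by (simp add: eta_def split: if_splits)
  next
    case False
    then show ?thesis using xy unfolding Evec_def by simp
  qed
  then show "x = y" by (simp add: fun_eq_iff)
qed

lemma Ogroup_preimage_of_lincomb:
  assumes "1 \<le> d" "L \<in> Ogroup d" "x \<in> Evec d" "a \<in> Evec d" "b \<in> Evec d"
    and "mapply d L x = (\<lambda>i. \<alpha> * mapply d L a i + \<beta> * mapply d L b i)"
  shows "x = (\<lambda>i. \<alpha> * a i + \<beta> * b i)"
  using inj_onD[OF Ogroup_inj_on[OF assms(1,2)] _ assms(3)] assms(4-6)
  by (simp add: mapply_linear)

lemma G0_subset_Ogroup: "G0 d \<subseteq> Ogroup d"
  unfolding G0_def by (rule connected_component_subset)

lemma idmat_in_G0: "idmat d \<in> G0 d"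
  unfolding G0_def by (simp add: idmat_in_Ogroup)

lemma path_from_idmat_in_G0:
  assumes "continuous_on {0..1::real} P" "P ` {0..1} \<subseteq> Ogroup d" "P 0 = idmat d"
  shows "P 1 \<in> G0 d"
proof -
  have "connected (P ` {0..1})"
    using assms(1) by (intro connected_continuous_image) auto
  moreover have "idmat d \<in> P ` {0..1}"
    using assms(3) by force
  ultimately have "P ` {0..1} \<subseteq> G0 d"
    unfolding G0_def using assms(2) connected_component_maximal by metis
  then show ?thesis by auto
qed

lemma continuous_on_mmul:
  assumes "\<And>i j. continuous_on S (\<lambda>s. A s i j)" "\<And>i j. continuous_on S (\<lambda>s. B s i j)"
  shows "continuous_on S (\<lambda>s. mmul d (A s) (B s))"
  unfolding mmul_def by (intro continuous_intros assms)

lemma continuous_on_matrix_entry: "continuous_on S (\<lambda>M::nat \<Rightarrow> nat \<Rightarrow> real. M i j)"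
  using continuous_on_product_then_coordinatewise[OF continuous_on_product_coordinates[of i], of j]
  by (rule continuous_on_subset) simp

lemma G0_mmul:
  assumes "A \<in> G0 d" "B \<in> G0 d"
  shows "mmul d A B \<in> G0 d"
proof -
  have "connected_component_set (Ogroup d) A = G0 d"
    using assms(1) unfolding G0_def by (metis connected_component_eq)
  moreover have "mmul d A ` G0 d \<subseteq> connected_component_set (Ogroup d) A"
  proof (rule connected_component_maximal)
    have "continuous_on (G0 d) (\<lambda>B. mmul d A B)"
      by (intro continuous_on_mmul continuous_on_const continuous_on_matrix_entry)
    then show "connected (mmul d A ` G0 d)"
      unfolding G0_def by (intro connected_continuous_image) auto
    have "A \<in> Emat d" using assms(1) G0_subset_Ogroup unfolding Ogroup_def by auto
    then have "mmul d A (idmat d) = A"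
      by (intro Emat_eqI) (auto simp: mmul_in_Emat idmat_in_Emat mapply_mmul mapply_idmat)
    then show "A \<in> mmul d A ` G0 d"
      using idmat_in_G0 by force
    show "mmul d A ` G0 d \<subseteq> Ogroup d"
      using assms(1) G0_subset_Ogroup mmul_in_Ogroup by blast
  qed
  ultimately show ?thesis using assms(2) by auto
qed

section \<open>Reflections\<close>

definition reflection :: "nat \<Rightarrow> (nat \<Rightarrow> real) \<Rightarrow> (nat \<Rightarrow> real) \<Rightarrow> (nat \<Rightarrow> real)" where
  "reflection d w x = (\<lambda>i. x i - 2 * bform d w x / bform d w w * w i)"

definition reflection_mat :: "nat \<Rightarrow> (nat \<Rightarrow> real) \<Rightarrow> (nat \<Rightarrow> nat \<Rightarrow> real)" where
  "reflection_mat d w = (\<lambda>i j. if i \<le> d \<and> j \<le> d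
     then idmat d i j - 2 * eta d j * w j / bform d w w * w i else 0)"

lemma reflection_orthogonal [simp]: "bform d w x = 0 \<Longrightarrow> reflection d w x = x"
  unfolding reflection_def by simp

lemma reflection_in_Evec: "w \<in> Evec d \<Longrightarrow> x \<in> Evec d \<Longrightarrow> reflection d w x \<in> Evec d"
  unfolding reflection_def Evec_def by simp

lemma bform_reflection_left:
  "bform d (reflection d w x) y = bform d x y - 2 * bform d w x / bform d w w * bform d w y"
  unfolding reflection_def by (simp only: bform_linear)

lemma bform_reflection_right:
  "bform d y (reflection d w x) = bform d y x - 2 * bform d w x / bform d w w * bform d y w"
  unfolding reflection_def by (simp only: bform_linear)

lemma reflection_involution:
  assumes "bform d w w \<noteq> 0"
  shows "reflection d w (reflection d w x) = x"
proof -
  have "bform d w (reflection d w x) = - bform d w x"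
    using assms by (simp add: bform_reflection_right)
  then show ?thesis
    using assms unfolding reflection_def[of d w "reflection d w x"]
    by (simp add: reflection_def algebra_simps)
qed

lemma reflection_isometry:
  assumes "bform d w w \<noteq> 0"
  shows "bform d (reflection d w x) (reflection d w y) = bform d x y"
proof -
  have "bform d x w = bform d w x"
    by (rule bform_sym)
  then show ?thesis
    using assms by (simp add: bform_reflection_left bform_reflection_right field_simps)
qed

lemma mapply_reflection_mat:
  assumes "1 \<le> d" "w \<in> Evec d" "x \<in> Evec d"
  shows "mapply d (reflection_mat d w) x = reflection d w x"
proof
  fix i
  show "mapply d (reflection_mat d w) x i = reflection d w x i"
  proof (cases "i \<le> d")
    case True
    have "mapply d (reflection_mat d w) x i
        = mapply d (idmat d) x i - 2 * w i / bform d w w * (\<Sum>j\<le>d. eta d j * w j * x j)"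
      using True unfolding mapply_def reflection_mat_def
      by (simp add: sum_subtractf sum_distrib_left algebra_simps)
    then show ?thesis
      using assms by (simp add: mapply_idmat bform_eq_sum reflection_def)
  next
    case False
    then show ?thesis
      using assms(2,3) unfolding mapply_def reflection_mat_def reflection_def Evec_def by simp
  qed
qed

lemma reflection_mat_in_Emat: "reflection_mat d w \<in> Emat d"
  unfolding Emat_def reflection_mat_def by auto

lemma reflection_mat_in_Ogroup:
  assumes "1 \<le> d" "w \<in> Evec d" "bform d w w \<noteq> 0"
  shows "reflection_mat d w \<in> Ogroup d"
  unfolding Ogroup_def using assms
  by (simp add: reflection_mat_in_Emat mapply_reflection_mat reflection_isometry)

lemma continuous_on_bform [continuous_intros]:
  "(\<And>i. continuous_on S (\<lambda>s. x s i)) \<Longrightarrow> (\<And>i. continuous_on S (\<lambda>s. y s i)) \<Longrightarrow>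
    continuous_on S (\<lambda>s. bform d (x s) (y s))"
  unfolding bform_def by (intro continuous_intros)

lemma continuous_on_reflection_mat:
  assumes "\<And>i. continuous_on S (\<lambda>s. w s i)" "\<And>s. s \<in> S \<Longrightarrow> bform d (w s) (w s) \<noteq> 0"
  shows "continuous_on S (\<lambda>s. reflection_mat d (w s) i j)"
proof (cases "i \<le> d \<and> j \<le> d")
  case True
  then show ?thesis
    unfolding reflection_mat_def by (simp; intro continuous_intros assms; simp add: assms)
next
  case False
  then have "(\<lambda>s. reflection_mat d (w s) i j) = (\<lambda>s. 0)"
    unfolding reflection_mat_def by auto
  then show ?thesis by (metis continuous_on_const)
qed

lemma reflection_path_product_in_G0:
  fixes w :: "real \<Rightarrow> nat \<Rightarrow> real"
  assumes "1 \<le> d" "\<And>i. continuous_on {0..1} (\<lambda>s. w s i)"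
    and "\<And>s. s \<in> {0..1} \<Longrightarrow> w s \<in> Evec d" "\<And>s. s \<in> {0..1} \<Longrightarrow> bform d (w s) (w s) \<noteq> 0"
  shows "\<exists>M\<in>G0 d. \<forall>x\<in>Evec d. mapply d M x = reflection d (w 1) (reflection d (w 0) x)"
proof -
  define P where "P s = mmul d (reflection_mat d (w s)) (reflection_mat d (w 0))" for s
  have w0: "w 0 \<in> Evec d"
    using assms(3) by simp
  have mapply_P: "mapply d (P s) x = reflection d (w s) (reflection d (w 0) x)"
    if "s \<in> {0..1}" "x \<in> Evec d" for s x
    unfolding P_def using assms(1) assms(3)[OF that(1)] w0 that(2)
    by (simp add: mapply_mmul mapply_reflection_mat reflection_in_Evec)
  have "continuous_on {0..1} P"
    unfolding P_def using assms(2,4)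
    by (intro continuous_on_mmul continuous_on_reflection_mat continuous_on_const) auto
  moreover have "P ` {0..1} \<subseteq> Ogroup d"
    unfolding P_def using assms by (auto intro!: mmul_in_Ogroup reflection_mat_in_Ogroup)
  moreover have "P 0 = idmat d"
  proof (rule Emat_eqI)
    show "P 0 \<in> Emat d" "idmat d \<in> Emat d"
      unfolding P_def by (simp_all add: mmul_in_Emat reflection_mat_in_Emat idmat_in_Emat)
    show "mapply d (P 0) x = mapply d (idmat d) x" if "x \<in> Evec d" for x
      using that assms(4) by (simp add: mapply_P reflection_involution mapply_idmat)
  qed
  ultimately have "P 1 \<in> G0 d"
    by (rule path_from_idmat_in_G0)
  then show ?thesis
    using mapply_P[of 1] by auto
qed

section \<open>Rotations, boosts and null rotations\<close>

text \<open>The hypothesis says that the mirror \<open>u + t\<close> has the sign of \<open>q\<close>; then so has every mirror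
  \<open>u + s t\<close>, \<open>0 \<le> s \<le> 1\<close>.\<close>
lemma rotation_in_G0:
  assumes "1 \<le> d" "u \<in> Evec d" "t \<in> Evec d" "bform d u u = q" "bform d t t = q"
    and "0 < q * (q + bform d u t)"
  shows "\<exists>M\<in>G0 d. \<forall>x\<in>Evec d. mapply d M x = reflection d (\<lambda>i. u i + t i) (reflection d u x)"
proof -
  define w where "w s = (\<lambda>i. u i + s * t i)" for s :: real
  have "bform d (w s) (w s) \<noteq> 0" if "s \<in> {0..1}" for s
  proof -
    have "q * bform d (w s) (w s) = q * q * (1 - s)\<^sup>2 + 2 * s * (q * (q + bform d u t))"
      unfolding w_def using assms(4,5)
      by (simp add: bform_sym[of d t u] power2_eq_square algebra_simps)
    moreover have "0 < q * q * (1 - s)\<^sup>2 + 2 * s * (q * (q + bform d u t))"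
    proof (cases "s = 0")
      case True
      have "q \<noteq> 0" using assms(6) by auto
      then show ?thesis using True by (auto simp: zero_less_mult_iff linorder_neq_iff)
    next
      case False
      then show ?thesis using that assms(6) by (intro add_nonneg_pos) auto
    qed
    ultimately show ?thesis by auto
  qed
  moreover have "continuous_on {0..1} (\<lambda>s. w s i)" for i
    unfolding w_def by (intro continuous_intros)
  moreover have "w s \<in> Evec d" for s
    unfolding w_def using assms(2,3) by simp
  moreover have "w 0 = u" "w 1 = (\<lambda>i. u i + t i)"
    unfolding w_def by simp_all
  ultimately show ?thesis
    using reflection_path_product_in_G0[OF assms(1), of w] by metis
qed

lemma rotation_in_G0_moves:
  assumes "1 \<le> d" "u \<in> Evec d" "t \<in> Evec d" "bform d u u = q" "bform d t t = q"
    and "0 < q * (q + bform d u t)"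
  shows "\<exists>M\<in>G0 d. mapply d M u = t
    \<and> (\<forall>x\<in>Evec d. bform d u x = 0 \<and> bform d t x = 0 \<longrightarrow> mapply d M x = x)"
proof -
  obtain M where M: "M \<in> G0 d"
    and Mx: "\<forall>x\<in>Evec d. mapply d M x = reflection d (\<lambda>i. u i + t i) (reflection d u x)"
    using rotation_in_G0[OF assms] by blast
  have "q \<noteq> 0" "q + bform d u t \<noteq> 0"
    using assms(6) by auto
  then have moves: "reflection d (\<lambda>i. u i + t i) (reflection d u u) = t"
    using assms(4,5) unfolding reflection_def
    by (simp add: bform_sym[of d t u] fun_eq_iff field_simps)
  show ?thesis
  proof (intro bexI conjI ballI impI)
    show "mapply d M u = t"
      using Mx assms(2) moves by simp
    fix x assume "x \<in> Evec d" "bform d u x = 0 \<and> bform d t x = 0"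
    then show "mapply d M x = x"
      using Mx by simp
  qed (rule M)
qed

lemma rotation_via_in_G0:
  assumes "1 \<le> d" "u \<in> Evec d" "w \<in> Evec d" "t \<in> Evec d"
    and "bform d u u = q" "bform d w w = q" "bform d t t = q" "q \<noteq> 0"
    and "0 \<le> q * bform d u w" "0 \<le> q * bform d w t"
  shows "\<exists>M\<in>G0 d. mapply d M u = t \<and> (\<forall>x\<in>Evec d.
    bform d u x = 0 \<and> bform d w x = 0 \<and> bform d t x = 0 \<longrightarrow> mapply d M x = x)"
proof -
  have "0 < q * q"
    using assms(8) by (auto simp: zero_less_mult_iff linorder_neq_iff)
  then have "0 < q * (q + bform d u w)" "0 < q * (q + bform d w t)"
    using assms(9,10) by (simp_all add: distrib_left)
  then obtain A B where "A \<in> G0 d" "mapply d A u = w"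
      "\<forall>x\<in>Evec d. bform d u x = 0 \<and> bform d w x = 0 \<longrightarrow> mapply d A x = x"
    and "B \<in> G0 d" "mapply d B w = t"
      "\<forall>x\<in>Evec d. bform d w x = 0 \<and> bform d t x = 0 \<longrightarrow> mapply d B x = x"
    using rotation_in_G0_moves assms(1-7) by metis
  then show ?thesis
    by (intro bexI[of _ "mmul d B A"]) (auto simp: mapply_mmul G0_mmul)
qed

lemma boost_in_G0:
  assumes "1 \<le> d" "u \<in> Evec d" "v \<in> Evec d"
    and "bform d u u = 1" "bform d v v = -1" "bform d u v = 0" "0 < r"
  shows "\<exists>M\<in>G0 d. mapply d M (\<lambda>i. u i + v i) = (\<lambda>i. r * (u i + v i))
    \<and> (\<forall>x\<in>Evec d. bform d u x = 0 \<and> bform d v x = 0 \<longrightarrow> mapply d M x = x)"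
proof -
  define c where "c = (r + 1 / r) / 2"
  define s where "s = (r - 1 / r) / 2"
  define t where "t = (\<lambda>i. c * u i + s * v i)"
  have vu: "bform d v u = 0"
    using assms(6) bform_sym by metis
  have c: "0 < c" "c * c - s * s = 1" "c + s = r"
    unfolding c_def s_def using assms(7) by (simp_all add: add_pos_pos field_simps)
  have "bform d t t = 1" "bform d u t = c"
    unfolding t_def using assms(4-6) vu c(2) by (simp_all add: algebra_simps)
  then obtain M where M: "M \<in> G0 d"
    and Mx: "\<forall>x\<in>Evec d. mapply d M x = reflection d (\<lambda>i. u i + t i) (reflection d u x)"
    using rotation_in_G0[OF assms(1,2), of t 1] assms(2-4) c(1) unfolding t_def by auto
  have "reflection d (\<lambda>i. u i + t i) (reflection d u (\<lambda>i. u i + v i)) = (\<lambda>i. r * (u i + v i))"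
    using assms(4-7) vu c unfolding reflection_def t_def
    by (simp add: fun_eq_iff field_simps) algebra
  moreover have "mapply d M x = x"
    if "x \<in> Evec d" "bform d u x = 0" "bform d v x = 0" for x
    using that Mx unfolding t_def by simp
  ultimately show ?thesis
    using M Mx assms(2,3) by (metis Evec_linear(1))
qed

lemma null_rotation_in_G0:
  assumes "1 \<le> d" "u \<in> Evec d" "n \<in> Evec d"
    and "bform d n n = 0" "bform d u n = 0" "bform d u u \<noteq> 0"
  shows "\<exists>M\<in>G0 d. \<forall>x\<in>Evec d. bform d n x = 0 \<longrightarrow> mapply d M x = (\<lambda>i. x i + c * bform d u x * n i)"
proof -
  define k where "k = - c * bform d u u / 2"
  define w where "w s = (\<lambda>i. u i + ((1 - s) * k) * n i)" for s :: real
  have nu: "bform d n u = 0"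
    using assms(5) bform_sym by metis
  have "bform d (w s) (w s) = bform d u u" for s
    unfolding w_def using assms(4,5) nu by simp
  moreover have "continuous_on {0..1} (\<lambda>s. w s i)" for i
    unfolding w_def by (intro continuous_intros)
  moreover have "w s \<in> Evec d" for s
    unfolding w_def using assms(2,3) by simp
  ultimately obtain M where M: "M \<in> G0 d"
    and Mx: "\<forall>x\<in>Evec d. mapply d M x = reflection d (w 1) (reflection d (w 0) x)"
    using reflection_path_product_in_G0[OF assms(1), of w] assms(6) by metis
  have w0: "w 0 = (\<lambda>i. u i + k * n i)" and w1: "w 1 = u"
    unfolding w_def by simp_all
  have Mx_null: "reflection d u (reflection d (w 0) x) = (\<lambda>i. x i + c * bform d u x * n i)"
    if "bform d n x = 0" for x
  proof -
    have w0x: "bform d (w 0) x = bform d u x" "bform d (w 0) (w 0) = bform d u u"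
      "bform d u (w 0) = bform d u u"
      unfolding w0 using that assms(4,5) nu by simp_all
    define y where "y = reflection d (w 0) x"
    have "bform d u y = - bform d u x"
      unfolding y_def using w0x assms(6) by (simp add: bform_reflection_right)
    then have "reflection d u y = (\<lambda>i. y i + 2 * bform d u x / bform d u u * u i)"
      unfolding reflection_def by simp
    also have "\<dots> = (\<lambda>i. x i + c * bform d u x * n i)"
      using assms(6) unfolding y_def reflection_def w0x unfolding w0 k_def
      by (simp add: fun_eq_iff field_simps)
    finally show ?thesis
      unfolding y_def .
  qed
  show ?thesis
    using M Mx Mx_null unfolding w1 by (intro bexI[of _ M]) auto
qed

section \<open>Normal form of an isotropic pair\<close>

text \<open>For \<open>d \<le> 2\<close> the only negative coordinate is \<open>1\<close>, and the null vector \<open>a\<^sub>1 b - b\<^sub>1 a\<close>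
  has no negative coordinates left.\<close>
lemma three_le_dim_if_isotropic_plane:
  assumes "a \<in> Evec d" "b \<in> Evec d"
    and indep: "\<forall>\<alpha> \<beta>. (\<lambda>i. \<alpha> * a i + \<beta> * b i) = (\<lambda>i. 0) \<longrightarrow> \<alpha> = 0 \<and> \<beta> = 0"
    and "bform d a a = 0" "bform d b b = 0" "bform d a b = 0"
  shows "3 \<le> d"
proof (rule ccontr)
  assume "\<not> 3 \<le> d"
  then have neg_coords: "{1..<d} \<subseteq> {1}"
    by auto
  define c where "c = (\<lambda>i. (- b 1) * a i + a 1 * b i)"
  have "c = (\<lambda>i. 0)"
  proof (rule null_eq_0_if_neg_coords_0)
    show "c \<in> Evec d"
      unfolding c_def using assms(1,2) by simp
    show "bform d c c = 0"
      unfolding c_def using assms(4-6) by (simp add: bform_sym[of d b a])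
    show "\<forall>j\<in>{1..<d}. c j = 0"
      unfolding c_def using neg_coords by auto
  qed
  then have "a 1 = 0"
    using indep unfolding c_def by blast
  then have "a = (\<lambda>i. 0)"
    using null_eq_0_if_neg_coords_0[OF assms(1,4)] neg_coords by auto
  then show False
    using indep[rule_format, of 1 0] by simp
qed

lemma null_vector_parts:
  assumes "a \<in> Evec d" "bform d a a = 0" "a \<noteq> (\<lambda>i. 0)"
  obtains r where "0 < r" "bform d (pos_part d a) (pos_part d a) = r * r"
    "bform d (neg_part d a) (neg_part d a) = - (r * r)"
proof -
  define r where "r = sqrt (a 0 * a 0 + a d * a d)"
  have rr: "r * r = a 0 * a 0 + a d * a d"
    unfolding r_def by (simp add: real_sqrt_mult_self)
  have "a 0 \<noteq> 0 \<or> a d \<noteq> 0"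
    using null_eq_0_if_pos_coords_0 assms by blast
  then have "0 < r"
    unfolding r_def by (simp add: sum_squares_gt_zero_iff)
  moreover have "bform d (pos_part d a) (pos_part d a) = r * r"
    "bform d (neg_part d a) (neg_part d a) = - (r * r)"
    using assms(2) unfolding rr by (simp_all add: bform_pos_part bform_neg_part, simp add: bform_def)
  ultimately show thesis
    using that by blast
qed

text \<open>The intermediate axes \<open>\<sigma> r e\<^sub>d\<close> and \<open>\<tau> r e\<^sub>2\<close> carry the signs that make both two-step
  rotations admissible.\<close>
lemma null_vector_to_e0_plus_e1:
  assumes "3 \<le> d" "a \<in> Evec d" "bform d a a = 0" "a \<noteq> (\<lambda>i. 0)"
  shows "\<exists>M\<in>G0 d. mapply d M a = (\<lambda>i. basis_e 0 i + basis_e 1 i)"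
proof -
  have d1: "1 \<le> d" and nd: "d \<noteq> 0" "d \<noteq> 1" "d \<noteq> 2" "1 < d" "2 < d"
    using assms(1) by auto
  obtain r where "0 < r" and pp: "bform d (pos_part d a) (pos_part d a) = r * r"
    and nn: "bform d (neg_part d a) (neg_part d a) = - (r * r)"
    using null_vector_parts[OF assms(2-4)] by blast
  define p where "p = pos_part d a"
  define n where "n = neg_part d a"
  define \<sigma> where "\<sigma> = (if 0 \<le> a d then 1 else -1 :: real)"
  define \<tau> where "\<tau> = (if 0 \<le> a 2 then 1 else -1 :: real)"
  have \<sigma>: "\<sigma> * \<sigma> = 1" "0 \<le> \<sigma> * a d" and \<tau>: "\<tau> * \<tau> = 1" "0 \<le> \<tau> * a 2"
    unfolding \<sigma>_def \<tau>_def by simp_all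
  obtain M1 where M1: "M1 \<in> G0 d" "mapply d M1 p = (\<lambda>i. r * basis_e 0 i)"
    and M1n: "mapply d M1 n = n"
  proof -
    have "0 \<le> (r * r * r) * (\<sigma> * a d)"
      using \<open>0 < r\<close> \<sigma> by (rule_tac mult_nonneg_nonneg) auto
    then have "0 \<le> r * r * (\<sigma> * r * a d)"
      by (simp add: ac_simps)
    then show ?thesis
      using that rotation_via_in_G0[OF d1 _ _ _ pp, of "\<lambda>i. \<sigma> * r * basis_e d i" "\<lambda>i. r * basis_e 0 i"]
        \<sigma> nd \<open>0 < r\<close> unfolding p_def n_def
      by (auto simp: bform_pos_neg_part)
  qed
  obtain M2 where M2: "M2 \<in> G0 d" "mapply d M2 n = (\<lambda>i. r * basis_e 1 i)"
    and M2e0: "mapply d M2 (\<lambda>i. r * basis_e 0 i) = (\<lambda>i. r * basis_e 0 i)"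
  proof -
    have "0 \<le> (r * r * r) * (\<tau> * a 2)"
      using \<open>0 < r\<close> \<tau> by (rule_tac mult_nonneg_nonneg) auto
    then have "0 \<le> - (r * r) * - (\<tau> * r * a 2)"
      by (simp add: ac_simps)
    then show ?thesis
      using that rotation_via_in_G0[OF d1 _ _ _ nn, of "\<lambda>i. \<tau> * r * basis_e 2 i" "\<lambda>i. r * basis_e 1 i"]
        \<tau> nd \<open>0 < r\<close> unfolding n_def
      by auto
  qed
  obtain M3 where M3: "M3 \<in> G0 d"
    "mapply d M3 (\<lambda>i. basis_e 0 i + basis_e 1 i) = (\<lambda>i. 1 / r * (basis_e 0 i + basis_e 1 i))"
    using boost_in_G0[OF d1, of "basis_e 0" "basis_e 1" "1 / r"] nd \<open>0 < r\<close> by auto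
  have "mapply d M1 a = (\<lambda>i. r * basis_e 0 i + n i)"
    using pos_plus_neg_part[OF assms(2)] M1 M1n unfolding p_def n_def by (metis mapply_linear(1))
  then have "mapply d (mmul d M2 M1) a = (\<lambda>i. r * (basis_e 0 i + basis_e 1 i))"
    using M2 M2e0 by (simp add: mapply_mmul mapply_linear distrib_left)
  then have "mapply d (mmul d M3 (mmul d M2 M1)) a = (\<lambda>i. basis_e 0 i + basis_e 1 i)"
    using M3 \<open>0 < r\<close> by (simp add: mapply_mmul mapply_linear)
  then show ?thesis
    using M1 M2 M3 G0_mmul by blast
qed

definition moves_fixing_e0_plus_e1 :: "nat \<Rightarrow> (nat \<Rightarrow> real) \<Rightarrow> (nat \<Rightarrow> real) \<Rightarrow> bool" where
  "moves_fixing_e0_plus_e1 d x y \<longleftrightarrow> (\<exists>M\<in>G0 d.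
     mapply d M (\<lambda>i. basis_e 0 i + basis_e 1 i) = (\<lambda>i. basis_e 0 i + basis_e 1 i) \<and> mapply d M x = y)"

lemma moves_fixing_e0_plus_e1_trans:
  assumes "moves_fixing_e0_plus_e1 d x y" "moves_fixing_e0_plus_e1 d y z"
  shows "moves_fixing_e0_plus_e1 d x z"
proof -
  obtain A B where "A \<in> G0 d" "B \<in> G0 d"
    "mapply d A (\<lambda>i. basis_e 0 i + basis_e 1 i) = (\<lambda>i. basis_e 0 i + basis_e 1 i)" "mapply d A x = y"
    "mapply d B (\<lambda>i. basis_e 0 i + basis_e 1 i) = (\<lambda>i. basis_e 0 i + basis_e 1 i)" "mapply d B y = z"
    using assms unfolding moves_fixing_e0_plus_e1_def by blast
  then show ?thesis
    unfolding moves_fixing_e0_plus_e1_def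
    by (intro bexI[of _ "mmul d B A"]) (auto simp: mapply_mmul G0_mmul)
qed

lemma null_rotation_clears_e0_plus_e1_component:
  assumes "1 < d" "b \<in> Evec d" "bform d (\<lambda>i. basis_e 0 i + basis_e 1 i) b = 0" "b d \<noteq> 0"
  shows "moves_fixing_e0_plus_e1 d b (\<lambda>i. b i - b 0 * (basis_e 0 i + basis_e 1 i))"
proof -
  define n0 where "n0 = (\<lambda>i. basis_e 0 i + basis_e 1 i)"
  define \<beta> where "\<beta> = b 0"
  have d1: "1 \<le> d"
    using assms(1) by simp
  have n0E: "n0 \<in> Evec d" and n0n0: "bform d n0 n0 = 0" and n0b: "bform d n0 b = 0"
    and ed: "bform d (basis_e d) n0 = 0" "bform d (basis_e d) (basis_e d) \<noteq> 0"
    using assms(1,3) unfolding n0_def by simp_all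
  obtain M where M: "M \<in> G0 d" and Mx: "\<forall>x\<in>Evec d. bform d n0 x = 0 \<longrightarrow>
      mapply d M x = (\<lambda>i. x i + (- \<beta> / b d) * bform d (basis_e d) x * n0 i)"
    using null_rotation_in_G0[OF d1 basis_e_in_Evec[OF order_refl] n0E n0n0 ed] by blast
  have "mapply d M n0 = n0" "mapply d M b = (\<lambda>i. b i - \<beta> * n0 i)"
    using Mx n0E n0n0 ed(1) assms(2,4) n0b d1 by simp_all
  then show ?thesis
    unfolding moves_fixing_e0_plus_e1_def n0_def \<beta>_def using M by blast
qed

lemma null_vector_rotation_fixing_e0_plus_e1:
  assumes "3 \<le> d" "v \<in> Evec d" "bform d v v = 0" "v 0 = 0" "v 1 = 0" "v d \<noteq> 0"
  shows "\<exists>\<epsilon>\<in>{-1, 1}. moves_fixing_e0_plus_e1 d v (\<lambda>i. v d * (\<epsilon> * basis_e (d - 1) i + basis_e d i))"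
proof -
  have d1: "1 \<le> d" and nd: "1 < d" "d - 1 \<noteq> 0" "d - 1 \<noteq> 1" "d - 1 \<noteq> d" "0 < d - 1" "d - 1 < d"
    using assms(1) by auto
  define n0 where "n0 = (\<lambda>i. basis_e 0 i + basis_e 1 i)"
  define w where "w = neg_part d v"
  define \<rho> where "\<rho> = \<bar>v d\<bar>"
  define e where "e = (if 0 \<le> v (d - 1) then 1 else -1 :: real)"
  define t where "t = (\<lambda>i. e * \<rho> * basis_e (d - 1) i)"
  have \<rho>: "0 < \<rho>" "\<rho> * \<rho> = v d * v d"
    unfolding \<rho>_def using assms(6) by (auto simp: abs_mult_self_eq)
  have e: "e * e = 1" "0 \<le> e * v (d - 1)"
    unfolding e_def by auto
  have v_split: "v = (\<lambda>i. w i + v d * basis_e d i)"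
    using assms(2,4) d1 unfolding w_def neg_part_def Evec_def by (auto simp: fun_eq_iff basis_e_def)
  have ww: "bform d w w = - (v d * v d)"
    using assms(3,4) unfolding w_def bform_neg_part by (simp add: bform_def)
  obtain M where M: "M \<in> G0 d" "mapply d M w = t"
    and M_fix: "\<forall>x\<in>Evec d. bform d w x = 0 \<and> bform d t x = 0 \<longrightarrow> mapply d M x = x"
  proof -
    have wt: "bform d w t = - (e * \<rho> * v (d - 1))"
      unfolding t_def w_def using nd by simp
    have "0 \<le> (v d * v d * \<rho>) * (e * v (d - 1))"
      using \<rho> e by (rule_tac mult_nonneg_nonneg) auto
    moreover have "0 < (v d * v d) * (v d * v d)"
      using assms(6) by (metis mult_pos_pos not_real_square_gt_zero)
    ultimately have "0 < - (v d * v d) * (- (v d * v d) + bform d w t)"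
      unfolding wt by (simp add: algebra_simps)
    moreover have "bform d t t = - (v d * v d)"
      unfolding t_def using d1 nd e \<rho> by (simp add: algebra_simps)
    moreover have "w \<in> Evec d" "t \<in> Evec d"
      unfolding w_def t_def by simp_all
    ultimately show ?thesis
      using that rotation_in_G0_moves[OF d1 _ _ ww] by blast
  qed
  have "bform d w n0 = 0" "bform d t n0 = 0"
    unfolding n0_def w_def t_def using assms(5) nd by simp_all
  then have "mapply d M n0 = n0"
    using M_fix unfolding n0_def using nd by simp
  moreover have "mapply d M (basis_e d) = basis_e d"
    using M_fix d1 nd unfolding w_def t_def by simp
  then have "mapply d M v = (\<lambda>i. v d * ((e * \<rho> / v d) * basis_e (d - 1) i + basis_e d i))"
    using M(2) assms(6) unfolding t_def by (subst v_split) (simp add: mapply_linear fun_eq_iff algebra_simps)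
  moreover have "e * \<rho> / v d \<in> {-1, 1}"
    unfolding e_def \<rho>_def using assms(6) by (auto simp: abs_if)
  ultimately show ?thesis
    unfolding moves_fixing_e0_plus_e1_def n0_def using M(1) by blast
qed

lemma boost_fixing_e0_plus_e1:
  assumes "3 \<le> d" "c \<noteq> 0" "\<epsilon> \<in> {-1, 1}"
  shows "moves_fixing_e0_plus_e1 d (\<lambda>i. c * (\<epsilon> * basis_e (d - 1) i + basis_e d i))
    (\<lambda>i. sgn c * (\<epsilon> * basis_e (d - 1) i + basis_e d i))"
proof -
  have d1: "1 \<le> d" and nd: "1 < d" "d - 1 \<noteq> 0" "d - 1 \<noteq> 1" "d - 1 \<noteq> d" "0 < d - 1" "d - 1 < d"
    using assms(1) by auto
  have "(\<lambda>i. \<epsilon> * basis_e (d - 1) i) \<in> Evec d" "bform d (basis_e d) (basis_e d) = 1"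
    "bform d (\<lambda>i. \<epsilon> * basis_e (d - 1) i) (\<lambda>i. \<epsilon> * basis_e (d - 1) i) = -1"
    "bform d (basis_e d) (\<lambda>i. \<epsilon> * basis_e (d - 1) i) = 0" "0 < 1 / \<bar>c\<bar>"
    using assms(2,3) nd by auto
  then obtain M where M: "M \<in> G0 d"
    "mapply d M (\<lambda>i. basis_e d i + \<epsilon> * basis_e (d - 1) i)
      = (\<lambda>i. 1 / \<bar>c\<bar> * (basis_e d i + \<epsilon> * basis_e (d - 1) i))"
    and M_fix: "\<forall>x\<in>Evec d. bform d (basis_e d) x = 0 \<and> bform d (\<lambda>i. \<epsilon> * basis_e (d - 1) i) x = 0
      \<longrightarrow> mapply d M x = x"
    using boost_in_G0[OF d1 basis_e_in_Evec[OF order_refl]] by blast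
  have swap: "(\<lambda>i. \<epsilon> * basis_e (d - 1) i + basis_e d i) = (\<lambda>i. basis_e d i + \<epsilon> * basis_e (d - 1) i)"
    by (simp add: add.commute)
  have "mapply d M (\<lambda>i. c * (\<epsilon> * basis_e (d - 1) i + basis_e d i))
      = (\<lambda>i. c * (1 / \<bar>c\<bar> * (basis_e d i + \<epsilon> * basis_e (d - 1) i)))"
    unfolding mapply_linear(3) swap M(2) ..
  also have "\<dots> = (\<lambda>i. sgn c * (\<epsilon> * basis_e (d - 1) i + basis_e d i))"
  proof -
    have "c * (1 / \<bar>c\<bar>) = sgn c"
      using assms(2) by (simp add: sgn_if abs_if)
    then show ?thesis
      by (metis add.commute mult.assoc)
  qed
  finally have Mm: "mapply d M (\<lambda>i. c * (\<epsilon> * basis_e (d - 1) i + basis_e d i))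
      = (\<lambda>i. sgn c * (\<epsilon> * basis_e (d - 1) i + basis_e d i))" .
  have "mapply d M (\<lambda>i. basis_e 0 i + basis_e 1 i) = (\<lambda>i. basis_e 0 i + basis_e 1 i)"
    using M_fix nd by simp
  then show ?thesis
    unfolding moves_fixing_e0_plus_e1_def using M(1) Mm by (intro bexI[of _ M]) simp_all
qed

lemma null_vector_orthogonal_to_e0_plus_e1_normal_form:
  assumes "3 \<le> d" "b \<in> Evec d" "bform d b b = 0"
    and "bform d (\<lambda>i. basis_e 0 i + basis_e 1 i) b = 0"
    and "\<forall>\<beta>. b \<noteq> (\<lambda>i. \<beta> * (basis_e 0 i + basis_e 1 i))"
  shows "\<exists>s\<in>{-1, 1::real}. \<exists>\<epsilon>\<in>{-1, 1::real}.
    moves_fixing_e0_plus_e1 d b (\<lambda>i. s * (\<epsilon> * basis_e (d - 1) i + basis_e d i))"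
proof -
  define \<beta> where "\<beta> = b 0"
  define v where "v = (\<lambda>i. b i - \<beta> * (basis_e 0 i + basis_e 1 i))"
  have "b 1 = \<beta>"
    using assms(1,4) unfolding \<beta>_def by simp
  then have vE: "v \<in> Evec d" and v_coords: "v 0 = 0" "v 1 = 0" "v d = b d"
    and vv: "bform d v v = 0"
    unfolding v_def \<beta>_def using assms(1-4) by simp_all
  have "b d \<noteq> 0"
  proof
    assume "b d = 0"
    then have "v = (\<lambda>i. 0)"
      using null_eq_0_if_pos_coords_0[OF vE vv] v_coords by simp
    then have "b = (\<lambda>i. \<beta> * (basis_e 0 i + basis_e 1 i))"
      unfolding v_def by (simp add: fun_eq_iff)
    then show False
      using assms(5) by blast
  qed
  have b_v: "moves_fixing_e0_plus_e1 d b v"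
    using null_rotation_clears_e0_plus_e1_component[OF _ assms(2,4) \<open>b d \<noteq> 0\<close>] assms(1)
    unfolding v_def \<beta>_def by simp
  obtain \<epsilon> where \<epsilon>: "\<epsilon> \<in> {-1, 1}"
    and v_m: "moves_fixing_e0_plus_e1 d v (\<lambda>i. b d * (\<epsilon> * basis_e (d - 1) i + basis_e d i))"
    using null_vector_rotation_fixing_e0_plus_e1[OF assms(1) vE vv v_coords(1,2)] \<open>b d \<noteq> 0\<close>
    unfolding v_coords(3) by blast
  have "sgn (b d) \<in> {-1, 1}"
    using \<open>b d \<noteq> 0\<close> by (simp add: sgn_if)
  then show ?thesis
    using moves_fixing_e0_plus_e1_trans[OF moves_fixing_e0_plus_e1_trans[OF b_v v_m]
        boost_fixing_e0_plus_e1[OF assms(1) \<open>b d \<noteq> 0\<close> \<epsilon>]] \<epsilon>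
    by blast
qed

lemma isotropic_pair_normal_form:
  assumes "3 \<le> d" "a \<in> Evec d" "b \<in> Evec d"
    and indep: "\<forall>\<alpha> \<beta>. (\<lambda>i. \<alpha> * a i + \<beta> * b i) = (\<lambda>i. 0) \<longrightarrow> \<alpha> = 0 \<and> \<beta> = 0"
    and "bform d a a = 0" "bform d b b = 0" "bform d a b = 0"
  shows "\<exists>L\<in>G0 d. mapply d L a = (\<lambda>i. basis_e 0 i + basis_e 1 i)
    \<and> (\<exists>s\<in>{-1, 1::real}. \<exists>\<epsilon>\<in>{-1, 1::real}.
          mapply d L b = (\<lambda>i. s * (\<epsilon> * basis_e (d - 1) i + basis_e d i)))"
proof -
  have "a \<noteq> (\<lambda>i. 0)"
    using indep[rule_format, of 1 0] by auto
  then obtain A where A: "A \<in> G0 d" "mapply d A a = (\<lambda>i. basis_e 0 i + basis_e 1 i)"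
    using null_vector_to_e0_plus_e1[OF assms(1,2,5)] by blast
  have AO: "A \<in> Ogroup d"
    using A(1) G0_subset_Ogroup by blast
  have "\<forall>\<beta>. mapply d A b \<noteq> (\<lambda>i. \<beta> * (basis_e 0 i + basis_e 1 i))"
  proof (intro allI notI)
    fix \<beta> assume "mapply d A b = (\<lambda>i. \<beta> * (basis_e 0 i + basis_e 1 i))"
    then have "b = (\<lambda>i. 0 * b i + \<beta> * a i)"
      using Ogroup_preimage_of_lincomb[OF _ AO assms(3,3,2), of 0 \<beta>] assms(1) A(2) by simp
    then show False
      using indep[rule_format, of "- \<beta>" 1] by (simp add: fun_eq_iff)
  qed
  moreover have "mapply d A b \<in> Evec d"
    using AO by (simp add: Ogroup_def mapply_in_Evec)
  moreover have "bform d (mapply d A b) (mapply d A b) = 0"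
    using Ogroup_bform[OF AO assms(3,3)] assms(6) by simp
  moreover have "bform d (\<lambda>i. basis_e 0 i + basis_e 1 i) (mapply d A b) = 0"
    using Ogroup_bform[OF AO assms(2,3)] A(2) assms(7) by simp
  ultimately obtain s \<epsilon> B where "s \<in> {-1, 1}" "\<epsilon> \<in> {-1, 1}" "B \<in> G0 d"
      "mapply d B (\<lambda>i. basis_e 0 i + basis_e 1 i) = (\<lambda>i. basis_e 0 i + basis_e 1 i)"
      "mapply d B (mapply d A b) = (\<lambda>i. s * (\<epsilon> * basis_e (d - 1) i + basis_e d i))"
    using null_vector_orthogonal_to_e0_plus_e1_normal_form[OF assms(1)]
    unfolding moves_fixing_e0_plus_e1_def by blast
  then show ?thesis
    using A G0_mmul by (intro bexI[of _ "mmul d B A"]) (auto simp: mapply_mmul)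
qed

text \<open>Subtracting \<open>x\<^sub>0 (e\<^sub>0 + e\<^sub>1) + x\<^sub>d (\<epsilon> e\<^sub>d\<^sub>-\<^sub>1 + e\<^sub>d)\<close> from \<open>x\<close> leaves a null vector
  whose \<open>e\<^sub>0\<close>- and \<open>e\<^sub>d\<close>-coordinates vanish.\<close>
lemma null_orthogonal_to_normal_pair_in_span:
  assumes "3 \<le> d" "x \<in> Evec d" "bform d x x = 0" "s \<in> {-1, 1}" "\<epsilon> \<in> {-1, 1}"
    and "bform d x (\<lambda>i. basis_e 0 i + basis_e 1 i) = 0"
    and "bform d x (\<lambda>i. s * (\<epsilon> * basis_e (d - 1) i + basis_e d i)) = 0"
  shows "\<exists>\<alpha> \<beta>. x = (\<lambda>i. \<alpha> * (basis_e 0 i + basis_e 1 i)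
    + \<beta> * (s * (\<epsilon> * basis_e (d - 1) i + basis_e d i)))"
proof -
  define n where "n = (\<lambda>i. basis_e 0 i + basis_e 1 i)"
  define m where "m = (\<lambda>i. s * (\<epsilon> * basis_e (d - 1) i + basis_e d i))"
  define \<alpha> where "\<alpha> = x 0"
  define \<beta> where "\<beta> = s * x d"
  define y where "y = (\<lambda>i. x i - (\<alpha> * n i + \<beta> * m i))"
  have nd: "1 \<le> d" "1 < d" "d - 1 \<noteq> 0" "d - 1 \<noteq> 1" "d - 1 \<noteq> d" "0 < d - 1" "d - 1 < d"
    using assms(1) by auto
  have nm: "bform d n n = 0" "bform d n m = 0" "bform d m n = 0"
    and coords: "n 0 = 1" "n d = 0" "m 0 = 0" "m d = s"
    unfolding n_def m_def using nd by simp_all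
  have "bform d m m = 0"
    unfolding m_def using nd assms(4,5) by auto
  have "y = (\<lambda>i. 0)"
  proof (rule null_eq_0_if_pos_coords_0)
    show "y \<in> Evec d"
      unfolding y_def n_def m_def using assms(2) nd by simp
    show "bform d y y = 0"
      unfolding y_def using assms(3,6,7) nm \<open>bform d m m = 0\<close> unfolding n_def[symmetric] m_def[symmetric]
      by (simp add: bform_sym[of d n x] bform_sym[of d m x])
    show "y 0 = 0" "y d = 0"
      unfolding y_def \<alpha>_def \<beta>_def using coords assms(4) by auto
  qed
  then have "x = (\<lambda>i. \<alpha> * n i + \<beta> * m i)"
    unfolding y_def by (simp add: fun_eq_iff)
  then show ?thesis
    unfolding n_def m_def by blast
qed

lemma null_orthogonal_in_span_if_normal_form:
  assumes "3 \<le> d" "L \<in> Ogroup d" "a \<in> Evec d" "b \<in> Evec d" "s \<in> {-1, 1}" "\<epsilon> \<in> {-1, 1}"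
    and La: "mapply d L a = (\<lambda>i. basis_e 0 i + basis_e 1 i)"
    and Lb: "mapply d L b = (\<lambda>i. s * (\<epsilon> * basis_e (d - 1) i + basis_e d i))"
    and "x \<in> Evec d" "bform d x a = 0" "bform d x b = 0" "bform d x x = 0"
  shows "\<exists>\<alpha> \<beta>. x = (\<lambda>i. \<alpha> * a i + \<beta> * b i)"
proof -
  have "mapply d L x \<in> Evec d"
    using assms(2) by (simp add: Ogroup_def mapply_in_Evec)
  moreover have "bform d (mapply d L x) (mapply d L x) = 0"
    "bform d (mapply d L x) (mapply d L a) = 0" "bform d (mapply d L x) (mapply d L b) = 0"
    using assms(3,4,9-12) by (simp_all add: Ogroup_bform[OF assms(2)])
  ultimately obtain \<alpha> \<beta> where "mapply d L x = (\<lambda>i. \<alpha> * mapply d L a i + \<beta> * mapply d L b i)"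
    using null_orthogonal_to_normal_pair_in_span[OF assms(1) _ _ assms(5,6)] La Lb by metis
  then show ?thesis
    using Ogroup_preimage_of_lincomb[OF _ assms(2,9,3,4)] assms(1) by auto
qed

theorem lemma2:
  fixes d :: nat and a b :: "nat \<Rightarrow> real"
  assumes "d \<ge> 1"
    and "a \<in> Evec d" and "b \<in> Evec d"
    and "\<forall>\<alpha> \<beta>. (\<lambda>i. \<alpha> * a i + \<beta> * b i) = (\<lambda>i. 0) \<longrightarrow> \<alpha> = 0 \<and> \<beta> = 0"
    and "bform d a a = 0" and "bform d b b = 0" and "bform d a b = 0"
  shows "d + 1 \<ge> 4
    \<and> (\<exists>\<Lambda>\<in>G0 d. mapply d \<Lambda> a = (\<lambda>i. basis_e 0 i + basis_e 1 i)
         \<and> (\<exists>s\<in>{-1, 1::real}. \<exists>\<epsilon>\<in>{-1, 1::real}.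
              mapply d \<Lambda> b = (\<lambda>i. s * (\<epsilon> * basis_e (d - 1) i + basis_e d i))))
    \<and> (\<forall>x\<in>Evec d. bform d x a = 0 \<and> bform d x b = 0 \<and> bform d x x = 0
         \<longrightarrow> (\<exists>\<alpha> \<beta>. x = (\<lambda>i. \<alpha> * a i + \<beta> * b i)))"
proof -
  have d3: "3 \<le> d"
    using three_le_dim_if_isotropic_plane[OF assms(2-7)] .
  then obtain L s \<epsilon> where L: "L \<in> G0 d" "mapply d L a = (\<lambda>i. basis_e 0 i + basis_e 1 i)"
    and s\<epsilon>: "s \<in> {-1, 1}" "\<epsilon> \<in> {-1, 1}"
    and Lb: "mapply d L b = (\<lambda>i. s * (\<epsilon> * basis_e (d - 1) i + basis_e d i))"
    using isotropic_pair_normal_form[OF _ assms(2-7)] by blast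
  have "L \<in> Ogroup d"
    using L(1) G0_subset_Ogroup by blast
  then have "\<forall>x\<in>Evec d. bform d x a = 0 \<and> bform d x b = 0 \<and> bform d x x = 0
      \<longrightarrow> (\<exists>\<alpha> \<beta>. x = (\<lambda>i. \<alpha> * a i + \<beta> * b i))"
    using null_orthogonal_in_span_if_normal_form[OF d3 _ assms(2,3) s\<epsilon> L(2) Lb] by blast
  then show ?thesis
    using d3 L Lb s\<epsilon> by auto
qed

end
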